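(* Let $k\ge1$ be odd and $\Gamma_1=\mathbf{PSL}(2,\mathbb{Z}[i])$. Let $S=\begin{psmallmatrix}0&-1\\1&0\end{psmallmatrix}$, $T=\begin{psmallmatrix}1&1\\0&1\end{psmallmatrix}$, $T_\omega=\begin{psmallmatrix}1&i\\0&1\end{psmallmatrix}$, $L=\begin{psmallmatrix}i&0\\0&-i\end{psmallmatrix}$, $U=TS$, $E=T_\omega SL$. Let $C_p(\Gamma_1,V_{k,k})$ be the space of maps $f:\Gamma_1\to V_{k,k}$ with $f(\gamma_1\gamma_2)=f(\gamma_1)|\gamma_2+f(\gamma_2)$ for all $\gamma_1,\gamma_2\in\Gamma_1$ and $f(T)=f(T_\omega)=f(L)=0$, and let $$W_{k,k}=\ker(\mathbf{1}+S)\cap\ker(\mathbf{1}-L)\cap\ker(\mathbf{1}+U+U^2)\cap\ker(\mathbf{1}+E+E^2)\subset V_{k,k}.$$ Then $f\mapsto f(S)$ is a $\mathbb{C}$-linear isomorphism $C_p(\Gamma_1,V_{k,k})\to W_{k,k}$.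
   Context: $V_{k,k}$ is the space of polynomials $\sum_{0\le i,j\le k}c_{ij}z^i\bar z^j$ ($c_{ij}\in\mathbb{C}$, $z,\bar z$ independent variables) with right action of $\gamma=\begin{psmallmatrix}a&b\\c&e\end{psmallmatrix}$: $(P|\gamma)(z,\bar z)=(cz+e)^k\overline{(cz+e)}^kP\!\left(\frac{az+b}{cz+e},\frac{\bar a\bar z+\bar b}{\bar c\bar z+\bar e}\right)$, extended linearly to the group ring; $\ker(X)=\{P\in V_{k,k}:P|X=0\}$. *)

theory Defs
  imports "HOL-Computational_Algebra.Polynomial" Complex_Main
begin

text \<open>2x2 complex matrices (a,b,c,e) standing for [[a,b],[c,e]].\<close>
type_synonym cmat = "complex \<times> complex \<times> complex \<times> complex"

definition mmul :: "cmat \<Rightarrow> cmat \<Rightarrow> cmat" where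
  "mmul g h = (case g of (a,b,c,d) \<Rightarrow> case h of (a',b',c',d') \<Rightarrow>
      (a*a' + b*c', a*b' + b*d', c*a' + d*c', c*b' + d*d'))"

definition mneg :: "cmat \<Rightarrow> cmat" where
  "mneg g = (case g of (a,b,c,d) \<Rightarrow> (-a,-b,-c,-d))"

definition gauss_int :: "complex \<Rightarrow> bool" where
  "gauss_int z \<longleftrightarrow> Re z \<in> \<int> \<and> Im z \<in> \<int>"

definition SL2ZI :: "cmat set" where
  "SL2ZI = {(a,b,c,d). gauss_int a \<and> gauss_int b \<and> gauss_int c \<and> gauss_int d \<and> a*d - b*c = 1}"

definition proj :: "cmat \<Rightarrow> cmat set" where
  "proj g = {g, mneg g}"

definition PSL2ZI :: "cmat set set" where
  "PSL2ZI = proj ` SL2ZI"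

definition pmul :: "cmat set \<Rightarrow> cmat set \<Rightarrow> cmat set" where
  "pmul X Y = {mmul g h | g h. g \<in> X \<and> h \<in> Y}"

text \<open>V_{k,k}: coefficient arrays c i j of z^i zbar^j with 0 \<le> i,j \<le> k.\<close>
type_synonym vpoly = "nat \<Rightarrow> nat \<Rightarrow> complex"

definition Vkk :: "nat \<Rightarrow> vpoly set" where
  "Vkk k = {P. \<forall>i j. (k < i \<or> k < j) \<longrightarrow> P i j = 0}"

text \<open>Slash action: (P|g)(z,w) = (cz+e)^k (cbar w+ebar)^k P((az+b)/(cz+e),(abar w+bbar)/(cbar w+ebar)),
  i.e. sum_{i,j} P_ij (az+b)^i (cz+e)^(k-i) (abar w+bbar)^j (cbar w+ebar)^(k-j), expanded into coefficients.\<close>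
definition slash :: "nat \<Rightarrow> vpoly \<Rightarrow> cmat \<Rightarrow> vpoly" where
  "slash k P g = (case g of (a,b,c,e) \<Rightarrow>
     (\<lambda>m n. \<Sum>i\<le>k. \<Sum>j\<le>k. P i j
        * coeff ([:b, a:] ^ i * [:e, c:] ^ (k - i)) m
        * coeff ([:cnj b, cnj a:] ^ j * [:cnj e, cnj c:] ^ (k - j)) n))"

text \<open>Action of a PSL class via a representative (independent of the sign).\<close>
definition pslash :: "nat \<Rightarrow> vpoly \<Rightarrow> cmat set \<Rightarrow> vpoly" where
  "pslash k P X = slash k P (SOME g. g \<in> X)"

definition matS :: cmat where "matS = (0, -1, 1, 0)"
definition matT :: cmat where "matT = (1, 1, 0, 1)"
definition matTw :: cmat where "matTw = (1, \<i>, 0, 1)"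
definition matL :: cmat where "matL = (\<i>, 0, 0, -\<i>)"
definition matU :: cmat where "matU = mmul matT matS"
definition matE :: cmat where "matE = mmul (mmul matTw matS) matL"

text \<open>C_p(Gamma_1, V_{k,k}); maps are taken extensional (0 outside Gamma_1).\<close>
definition Cp :: "nat \<Rightarrow> (cmat set \<Rightarrow> vpoly) set" where
  "Cp k = {f. (\<forall>X. X \<notin> PSL2ZI \<longrightarrow> f X = (\<lambda>_ _. 0))
           \<and> (\<forall>X\<in>PSL2ZI. f X \<in> Vkk k)
           \<and> (\<forall>X\<in>PSL2ZI. \<forall>Y\<in>PSL2ZI.
                 f (pmul X Y) = (\<lambda>m n. pslash k (f X) Y m n + f Y m n))
           \<and> f (proj matT) = (\<lambda>_ _. 0) \<and> f (proj matTw) = (\<lambda>_ _. 0)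
           \<and> f (proj matL) = (\<lambda>_ _. 0)}"

definition Wkk :: "nat \<Rightarrow> vpoly set" where
  "Wkk k = {P \<in> Vkk k.
      (\<forall>m n. P m n + slash k P matS m n = 0)
    \<and> (\<forall>m n. P m n - slash k P matL m n = 0)
    \<and> (\<forall>m n. P m n + slash k P matU m n + slash k P (mmul matU matU) m n = 0)
    \<and> (\<forall>m n. P m n + slash k P matE m n + slash k P (mmul matE matE) m n = 0)}"

end

theory Submission
  imports Defs "HOL-Library.Function_Algebras"
begin

text \<open>The restriction \<open>f \<mapsto> f(S)\<close> lands in \<open>W\<^sub>k\<^sub>,\<^sub>k\<close> because \<open>S\<close> and \<open>SL\<close> have order 2 and
  \<open>U = TS\<close>, \<open>E = T\<^sub>\<omega>SL\<close> have order 3 in \<open>\<Gamma>\<^sub>1\<close>, while a cocycle vanishing at \<open>T\<close>, \<open>T\<^sub>\<omega>\<close>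
  and \<open>L\<close> takes the value \<open>f(S)\<close> at \<open>U\<close> and \<open>E\<close>. It is injective because the Euclidean
  algorithm on the first column shows that \<open>SL(2,\<int>[i])\<close> is generated by \<open>S\<close>, \<open>L\<close>, \<open>-1\<close>
  and the translations \<open>T\<^sub>t\<close>, at all of which a cocycle is determined by \<open>f(S)\<close>.

  For surjectivity note that a cocycle vanishing on the upper triangular matrices only depends on
  the bottom row \<open>(c, d)\<close> of its argument. Euclidean division with rounded quotients turns the
  cocycle relation into a recursive definition of this value \<open>h(c, d)\<close> in terms of \<open>P \<in> W\<^sub>k\<^sub>,\<^sub>k\<close>.
  The relations defining \<open>W\<^sub>k\<^sub>,\<^sub>k\<close> show, by induction on \<open>|c|\<close>, that every quotient \<open>q\<close> with
  \<open>|d/c - q| < 1\<close> computes the same \<open>h(c, d)\<close>; this yields \<open>h((c, d) S) = h(c, d)|S + P\<close> and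
  \<open>h((c, d) L) = h(c, d)|L\<close>, and by generation the cocycle relation for all of \<open>SL(2,\<int>[i])\<close>.\<close>

section \<open>The slash action\<close>

definition mat_cnj :: "cmat \<Rightarrow> cmat" where
  "mat_cnj g = (case g of (a,b,c,e) \<Rightarrow> (cnj a, cnj b, cnj c, cnj e))"

definition slash_coeff :: "nat \<Rightarrow> cmat \<Rightarrow> nat \<Rightarrow> nat \<Rightarrow> complex" where
  "slash_coeff k g i m = (case g of (a,b,c,e) \<Rightarrow> coeff ([:b,a:]^i * [:e,c:]^(k-i)) m)"

lemma slash_eq_slash_coeff:
  "slash k P g = (\<lambda>m n. \<Sum>i\<le>k. \<Sum>j\<le>k. P i j * slash_coeff k g i m * slash_coeff k (mat_cnj g) j n)"
  by (cases g) (simp add: slash_def slash_coeff_def mat_cnj_def)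

definition homogenize :: "nat \<Rightarrow> 'a::comm_ring_1 poly \<Rightarrow> 'a poly \<Rightarrow> 'a poly \<Rightarrow> 'a poly" where
  "homogenize k p U V = (\<Sum>m\<le>k. smult (coeff p m) (U^m * V^(k-m)))"

lemma homogenize_mult_linear:
  assumes "degree p \<le> k"
  shows "homogenize (Suc k) (p * [:\<beta>,\<alpha>:]) U V = homogenize k p U V * (smult \<alpha> U + smult \<beta> V)"
proof -
  have coeff_prod: "coeff (p * [:\<beta>,\<alpha>:]) m = \<beta> * coeff p m + (if m = 0 then 0 else \<alpha> * coeff p (m - 1))" for m
    by (cases m) (simp_all add: mult_pCons_right coeff_pCons)
  have top: "coeff p (Suc k) = 0" using assms by (simp add: coeff_eq_0)
  have "homogenize (Suc k) (p * [:\<beta>,\<alpha>:]) U V =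
     (\<Sum>m\<le>Suc k. smult (\<beta> * coeff p m) (U^m * V^(Suc k-m)))
     + (\<Sum>m\<le>Suc k. smult (if m = 0 then 0 else \<alpha> * coeff p (m - 1)) (U^m * V^(Suc k-m)))"
    unfolding homogenize_def coeff_prod by (simp add: smult_add_left sum.distrib)
  also have "(\<Sum>m\<le>Suc k. smult (\<beta> * coeff p m) (U^m * V^(Suc k-m)))
      = homogenize k p U V * smult \<beta> V"
    unfolding homogenize_def sum_distrib_right using top
    by (simp, intro sum.cong refl) (simp add: Suc_diff_le mult_ac)
  also have "(\<Sum>m\<le>Suc k. smult (if m = 0 then 0 else \<alpha> * coeff p (m - 1)) (U^m * V^(Suc k-m)))
      = homogenize k p U V * smult \<alpha> U"
    unfolding homogenize_def sum_distrib_right sum.atMost_Suc_shift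
    by (simp, intro sum.cong refl) (simp add: mult_ac)
  finally show ?thesis by (simp add: distrib_left add_ac)
qed

lemma degree_linear_power_le: "degree ([:b,a:]^i) \<le> i"
  by (rule order_trans[OF degree_power_le]) simp

lemma homogenize_linear_powers:
  "homogenize (i + j) ([:b,a:]^i * [:e,c:]^j) U V = (smult a U + smult b V)^i * (smult c U + smult e V)^j"
proof (induction j)
  case 0
  show ?case
  proof (induction i)
    case 0
    then show ?case by (simp add: homogenize_def)
  next
    case (Suc i)
    then show ?case
      using homogenize_mult_linear[OF degree_linear_power_le, where \<beta> = b and \<alpha> = a and U = U and V = V]
      by (simp add: mult.commute)
  qed
next
  case (Suc j)
  have "degree ([:b,a:]^i * [:e,c:]^j) \<le> i + j"
    using degree_mult_le[of "[:b,a:]^i" "[:e,c:]^j"] degree_linear_power_le[of b a i] degree_linear_power_le[of e c j]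
    by linarith
  then have "homogenize (Suc (i + j)) (([:b,a:]^i * [:e,c:]^j) * [:e,c:]) U V
      = (smult a U + smult b V)^i * (smult c U + smult e V)^j * (smult c U + smult e V)"
    using homogenize_mult_linear Suc.IH by metis
  then show ?case by (simp only: power_Suc2 mult.assoc add_Suc_right)
qed

text \<open>Substituting \<open>z \<mapsto> (a'z + b')/(c'z + e')\<close> into \<open>(az + b)\<^sup>i (cz + e)\<^bsup>k-i\<^esup>\<close> and clearing
  denominators composes the two substitutions: the coefficient matrices of the action multiply.\<close>

lemma sum_slash_coeff_mmul:
  assumes "i \<le> k"
  shows "(\<Sum>m'\<le>k. slash_coeff k g i m' * slash_coeff k h m' m) = slash_coeff k (mmul g h) i m"
proof -
  obtain a b c e where g: "g = (a,b,c,e)" by (cases g)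
  obtain a' b' c' e' where h: "h = (a',b',c',e')" by (cases h)
  let ?U = "[:b',a':]" and ?V = "[:e',c':]"
  have "(\<Sum>m'\<le>k. slash_coeff k g i m' * slash_coeff k h m' m)
      = coeff (homogenize k ([:b,a:]^i * [:e,c:]^(k-i)) ?U ?V) m"
    by (simp add: homogenize_def coeff_sum g h slash_coeff_def)
  also have "homogenize k ([:b,a:]^i * [:e,c:]^(k-i)) ?U ?V
      = [:a*b' + b*e', a*a' + b*c':]^i * [:c*b' + e*e', c*a' + e*c':]^(k-i)"
    using homogenize_linear_powers[of i "k-i" b a e c ?U ?V] assms by simp
  finally show ?thesis by (simp add: g h slash_coeff_def mmul_def)
qed

lemma mat_cnj_mmul: "mat_cnj (mmul g h) = mmul (mat_cnj g) (mat_cnj h)"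
  by (cases g; cases h) (simp add: mat_cnj_def mmul_def)

lemma sum_swap_pairs:
  "(\<Sum>a\<in>A. \<Sum>b\<in>B. \<Sum>c\<in>C. \<Sum>d\<in>D. F a b c d) = (\<Sum>c\<in>C. \<Sum>d\<in>D. \<Sum>a\<in>A. \<Sum>b\<in>B. F a b c d)"
proof -
  have "(\<Sum>a\<in>A. \<Sum>b\<in>B. \<Sum>c\<in>C. \<Sum>d\<in>D. F a b c d) = (\<Sum>a\<in>A. \<Sum>c\<in>C. \<Sum>b\<in>B. \<Sum>d\<in>D. F a b c d)"
    by (intro sum.cong refl sum.swap)
  also have "\<dots> = (\<Sum>c\<in>C. \<Sum>a\<in>A. \<Sum>d\<in>D. \<Sum>b\<in>B. F a b c d)"
    by (subst sum.swap) (intro sum.cong refl sum.swap)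
  also have "\<dots> = (\<Sum>c\<in>C. \<Sum>d\<in>D. \<Sum>a\<in>A. \<Sum>b\<in>B. F a b c d)"
    by (intro sum.cong refl sum.swap)
  finally show ?thesis .
qed

lemma slash_mmul: "slash k (slash k P g) h = slash k P (mmul g h)"
proof (intro ext)
  fix m n
  let ?A = "slash_coeff k g" and ?B = "slash_coeff k (mat_cnj g)"
    and ?C = "slash_coeff k h" and ?D = "slash_coeff k (mat_cnj h)"
  have "slash k (slash k P g) h m n =
     (\<Sum>m'\<le>k. \<Sum>n'\<le>k. \<Sum>i\<le>k. \<Sum>j\<le>k. P i j * ?A i m' * ?B j n' * ?C m' m * ?D n' n)"
    by (simp add: slash_eq_slash_coeff sum_distrib_right)
  also have "\<dots> = (\<Sum>i\<le>k. \<Sum>j\<le>k. \<Sum>m'\<le>k. \<Sum>n'\<le>k. P i j * ?A i m' * ?B j n' * ?C m' m * ?D n' n)"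
    by (rule sum_swap_pairs)
  also have "\<dots> = (\<Sum>i\<le>k. \<Sum>j\<le>k. P i j * (\<Sum>m'\<le>k. ?A i m' * ?C m' m) * (\<Sum>n'\<le>k. ?B j n' * ?D n' n))"
    by (simp add: sum_distrib_left sum_distrib_right mult_ac)
  also have "\<dots> = slash k P (mmul g h) m n"
    by (simp add: slash_eq_slash_coeff sum_slash_coeff_mmul mat_cnj_mmul)
  finally show "slash k (slash k P g) h m n = slash k P (mmul g h) m n" .
qed

lemma slash_coeff_eq_0:
  assumes "i \<le> k" "k < m"
  shows "slash_coeff k g i m = 0"
proof -
  obtain a b c e where g: "g = (a,b,c,e)" by (cases g)
  have "degree ([:b,a:]^i * [:e,c:]^(k-i)) \<le> i + (k - i)"
    using degree_mult_le[of "[:b,a:]^i" "[:e,c:]^(k-i)"]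
      degree_linear_power_le[of b a i] degree_linear_power_le[of e c "k-i"]
    by linarith
  then show ?thesis using assms by (simp add: slash_coeff_def g coeff_eq_0)
qed

lemma slash_in_Vkk: "slash k P g \<in> Vkk k"
  by (auto simp: Vkk_def slash_eq_slash_coeff slash_coeff_eq_0)

lemma slash_coeff_mneg:
  assumes "i \<le> k"
  shows "slash_coeff k (mneg g) i m = (-1)^k * slash_coeff k g i m"
proof -
  obtain a b c e where g: "g = (a,b,c,e)" by (cases g)
  have "[:-b,-a:] = smult (-1) [:b,a:]" "[:-e,-c:] = smult (-1) [:e,c:]" by simp_all
  then have "[:-b,-a:]^i * [:-e,-c:]^(k-i) = smult ((-1)^(i + (k-i))) ([:b,a:]^i * [:e,c:]^(k-i))"
    by (simp only: smult_power mult_smult_left mult_smult_right power_add smult_smult mult.commute)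
  then show ?thesis using assms by (simp add: slash_coeff_def g mneg_def)
qed

lemma mat_cnj_mneg: "mat_cnj (mneg g) = mneg (mat_cnj g)"
  by (cases g) (simp add: mat_cnj_def mneg_def)

lemma slash_mneg: "slash k P (mneg g) = slash k P g"
proof -
  have "(-1::complex)^k * (-1)^k = 1" by (simp flip: power_mult_distrib)
  then show ?thesis
    unfolding slash_eq_slash_coeff mat_cnj_mneg
    by (intro ext sum.cong refl) (auto simp: slash_coeff_mneg mult_ac)
qed

definition mat_id :: cmat where
  "mat_id = (1, 0, 0, 1)"

lemma slash_coeff_id:
  assumes "i \<le> k"
  shows "slash_coeff k mat_id i m = (if m = i then 1 else 0)"
proof -
  have "[:0,1:]^i = monom (1::complex) i" by (simp add: monom_altdef)
  moreover have "[:1::complex:] ^ (k-i) = 1" by (simp flip: one_pCons)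
  ultimately show ?thesis by (simp add: slash_coeff_def mat_id_def coeff_monom)
qed

lemma mat_cnj_id: "mat_cnj mat_id = mat_id"
  by (simp add: mat_cnj_def mat_id_def)

lemma slash_id:
  assumes "P \<in> Vkk k"
  shows "slash k P mat_id = P"
proof (intro ext)
  fix m n
  show "slash k P mat_id m n = P m n"
  proof (cases "m \<le> k \<and> n \<le> k")
    case True
    then show ?thesis
      by (simp add: slash_eq_slash_coeff slash_coeff_id mat_cnj_id if_distrib[of "(*) _"] sum.delta
          cong: if_cong)
  next
    case False
    then show ?thesis
      using assms slash_in_Vkk[of k P mat_id] by (auto simp: Vkk_def)
  qed
qed

lemma zero_in_Vkk: "0 \<in> Vkk k"
  and add_in_Vkk: "P \<in> Vkk k \<Longrightarrow> Q \<in> Vkk k \<Longrightarrow> P + Q \<in> Vkk k"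
  by (auto simp: Vkk_def)

lemma slash_add: "slash k (P + Q) g = slash k P g + slash k Q g"
  unfolding slash_eq_slash_coeff by (auto simp: algebra_simps sum.distrib fun_eq_iff)

lemma slash_zero: "slash k 0 g = 0"
  unfolding slash_eq_slash_coeff by (auto simp: fun_eq_iff)

lemma slash_uminus: "slash k (- P) g = - slash k P g"
  unfolding slash_eq_slash_coeff by (auto simp: sum_negf fun_eq_iff)

lemma slash_scale: "slash k (\<lambda>m n. c * P m n) g = (\<lambda>m n. c * slash k P g m n)"
  unfolding slash_eq_slash_coeff by (auto simp: sum_distrib_left mult_ac)

section \<open>Gaussian integers and Euclidean division\<close>

lemma gauss_int_add [simp]: "gauss_int a \<Longrightarrow> gauss_int b \<Longrightarrow> gauss_int (a + b)"
  and gauss_int_diff [simp]: "gauss_int a \<Longrightarrow> gauss_int b \<Longrightarrow> gauss_int (a - b)"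
  and gauss_int_mult [simp]: "gauss_int a \<Longrightarrow> gauss_int b \<Longrightarrow> gauss_int (a * b)"
  and gauss_int_minus [simp]: "gauss_int (- a) = gauss_int a"
  and gauss_int_of_int [simp]: "gauss_int (of_int n)"
  and gauss_int_0 [simp]: "gauss_int 0"
  and gauss_int_1 [simp]: "gauss_int 1"
  and gauss_int_ii [simp]: "gauss_int \<i>"
  by (auto simp: gauss_int_def)

lemma gauss_int_cases:
  assumes "gauss_int z"
  obtains a b :: int where "z = Complex (of_int a) (of_int b)"
  using assms by (auto simp: gauss_int_def complex_eq_iff elim!: Ints_cases)

lemma cmod_power2: "(cmod z)^2 = (Re z)^2 + (Im z)^2"
  by (simp add: cmod_def)

definition gnorm :: "complex \<Rightarrow> nat" where
  "gnorm z = nat \<lfloor>(cmod z)^2\<rfloor>"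

lemma of_nat_gnorm: "gauss_int z \<Longrightarrow> real (gnorm z) = (cmod z)^2"
  by (elim gauss_int_cases) (simp add: gnorm_def cmod_power2 flip: of_int_power of_int_add)

lemma gnorm_less_iff:
  assumes "gauss_int a" "gauss_int b"
  shows "gnorm a < gnorm b \<longleftrightarrow> cmod a < cmod b"
proof -
  have "gnorm a < gnorm b \<longleftrightarrow> (cmod a)^2 < (cmod b)^2"
    using assms by (metis of_nat_gnorm of_nat_less_iff)
  also have "\<dots> \<longleftrightarrow> cmod a < cmod b"
    using power_mono_iff[of "cmod b" "cmod a" 2] by (simp flip: not_le)
  finally show ?thesis .
qed

lemma gnorm_eq_iff: "gauss_int a \<Longrightarrow> gauss_int b \<Longrightarrow> gnorm a = gnorm b \<longleftrightarrow> cmod a = cmod b"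
  by (simp flip: of_nat_eq_iff[where 'a = real] add: of_nat_gnorm power2_eq_iff_nonneg)

lemma gnorm_eq_0_iff: "gauss_int a \<Longrightarrow> gnorm a = 0 \<longleftrightarrow> a = 0"
  using of_nat_gnorm[of a] by auto

lemma gnorm_0 [simp]: "gnorm 0 = 0"
  and gnorm_minus [simp]: "gnorm (- a) = gnorm a"
  by (simp_all add: gnorm_def norm_mult)

lemma gnorm_mult_unit: "cmod u = 1 \<Longrightarrow> gnorm (u * z) = gnorm z"
  by (simp add: gnorm_def norm_mult)

lemma gauss_unitD:
  assumes "u \<in> {1, -1, \<i>, -\<i>}"
  shows "gauss_int u" "gauss_int (cnj u)" "cnj u * u = 1" "u \<noteq> 0" "cmod u = 1" "cmod (cnj u) = 1"
  using assms by auto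

lemma gnorm_minus_commute: "gnorm (a - b) = gnorm (b - a)"
  by (simp add: gnorm_def norm_minus_commute)

lemma gnorm_diff_mult_less_iff:
  assumes "c \<noteq> 0" "gauss_int c" "gauss_int d" "gauss_int q"
  shows "gnorm (d - q * c) < gnorm c \<longleftrightarrow> cmod (d / c - q) < 1"
proof -
  have "d - q * c = c * (d / c - q)" using assms(1) by (simp add: field_simps)
  then have "cmod (d - q * c) = cmod c * cmod (d / c - q)" by (simp add: norm_mult)
  then show ?thesis using assms by (simp add: gnorm_less_iff)
qed

definition gauss_round :: "complex \<Rightarrow> complex" where
  "gauss_round z = Complex (of_int \<lfloor>Re z + 1/2\<rfloor>) (of_int \<lfloor>Im z + 1/2\<rfloor>)"

lemma gauss_int_gauss_round [simp]: "gauss_int (gauss_round z)"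
  by (simp add: gauss_round_def gauss_int_def)

lemma gauss_round_bounds: "\<bar>Re (z - gauss_round z)\<bar> \<le> 1/2" "\<bar>Im (z - gauss_round z)\<bar> \<le> 1/2"
  unfolding gauss_round_def abs_le_iff by simp_all linarith+

lemma power2_le_quarter: "\<bar>s\<bar> \<le> 1/2 \<Longrightarrow> s^2 \<le> (1/4 :: real)"
  using power_mono[of "\<bar>s\<bar>" "1/2" 2] by (simp add: power2_abs power_divide)

lemma cmod_less_1_iff: "cmod w < 1 \<longleftrightarrow> (Re w)^2 + (Im w)^2 < 1"
  using abs_square_less_1[of "cmod w"] by (simp add: cmod_power2)

lemma cmod_less_1_if_centered: "\<bar>Re z\<bar> \<le> 1/2 \<Longrightarrow> \<bar>Im z\<bar> \<le> 1/2 \<Longrightarrow> cmod z < 1"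
  using power2_le_quarter[of "Re z"] power2_le_quarter[of "Im z"] by (simp add: cmod_less_1_iff)

lemma gauss_round_add: "gauss_int t \<Longrightarrow> gauss_round (z + t) = gauss_round z + t"
proof (elim gauss_int_cases)
  fix a b assume "t = Complex (of_int a) (of_int b)"
  moreover have "\<lfloor>x + of_int n + 1/2\<rfloor> = \<lfloor>x + 1/2\<rfloor> + n" for x :: real and n
    using floor_add_int[of "x + 1/2" n] by (simp add: add_ac)
  ultimately show ?thesis by (simp add: gauss_round_def complex_eq_iff)
qed

lemma gauss_round_gauss_int [simp]: "gauss_int t \<Longrightarrow> gauss_round t = t"
  using gauss_round_add[of t 0] by (simp add: gauss_round_def complex_eq_iff)

lemma gnorm_euclid_step:
  assumes "c \<noteq> 0" "gauss_int c" "gauss_int d"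
  shows "gnorm (gauss_round (d/c) * c - d) < gnorm c"
proof -
  have "cmod (d / c - gauss_round (d/c)) < 1"
    using gauss_round_bounds by (rule cmod_less_1_if_centered)
  then show ?thesis
    using gnorm_diff_mult_less_iff[OF assms gauss_int_gauss_round] by (simp add: gnorm_minus_commute)
qed

lemma gauss_int_unit:
  assumes "gauss_int a" "gauss_int e" "a * e = 1"
  shows "a \<in> {1, -1, \<i>, -\<i>}"
proof -
  have "real (gnorm a) * real (gnorm e) = 1"
    using assms by (simp add: of_nat_gnorm flip: norm_mult power_mult_distrib)
  then have "gnorm a * gnorm e = 1" by (metis of_nat_1 of_nat_eq_iff of_nat_mult)
  then have "gnorm a = 1" by simp
  moreover obtain x y :: int where xy: "a = Complex x y" using assms(1) by (rule gauss_int_cases)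
  ultimately have "x^2 + y^2 = 1"
    using of_nat_gnorm[OF assms(1)] by (simp add: cmod_power2 flip: of_int_power of_int_add)
  then have "(x = 1 \<or> x = -1) \<and> y = 0 \<or> x = 0 \<and> (y = 1 \<or> y = -1)"
    by (smt (verit) power2_less_0 power2_eq_1_iff zero_le_power2 int_one_le_iff_zero_less
        power2_less_eq_zero_iff abs_le_square_iff power2_eq_square)
  then show ?thesis using xy by (auto simp: complex_eq_iff)
qed

lemma exists_unit_near_unit_circle:
  assumes "cmod z = 1"
  shows "\<exists>u\<in>{1, -1, \<i>, -\<i>}. cmod (z - u) < 1"
proof -
  let ?s = "Re z" and ?t = "Im z"
  have n: "?s^2 + ?t^2 = 1" using assms by (simp flip: cmod_power2)
  then have "\<not> (\<bar>?s\<bar> \<le> 1/2 \<and> \<bar>?t\<bar> \<le> 1/2)"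
    using power2_le_quarter[of ?s] power2_le_quarter[of ?t] by linarith
  moreover have "cmod (z - 1) < 1 \<longleftrightarrow> ?s > 1/2" "cmod (z + 1) < 1 \<longleftrightarrow> ?s < -1/2"
    "cmod (z - \<i>) < 1 \<longleftrightarrow> ?t > 1/2" "cmod (z + \<i>) < 1 \<longleftrightarrow> ?t < -1/2"
    using n by (simp_all add: cmod_less_1_iff power2_diff power2_sum) linarith+
  ultimately show ?thesis by auto
qed

lemma near_centered_cases:
  assumes "gauss_int q" "\<bar>Re z\<bar> \<le> 1/2" "\<bar>Im z\<bar> \<le> 1/2" "cmod (z - q) < 1"
  obtains "q = 0" | "q \<in> {1, -1, \<i>, -\<i>}"
  | a b where "a \<in> {1, -1}" "b \<in> {\<i>, -\<i>}" "q = a + b" "cmod (z - a) < 1 \<or> cmod (z - b) < 1"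
proof -
  obtain x y :: int where q: "q = Complex x y" using assms(1) by (rule gauss_int_cases)
  have "\<bar>Re (z - q)\<bar> < 1" "\<bar>Im (z - q)\<bar> < 1"
    using abs_Re_le_cmod[of "z - q"] abs_Im_le_cmod[of "z - q"] assms(4) by linarith+
  then have "\<bar>x\<bar> \<le> 1" "\<bar>y\<bar> \<le> 1" using assms(2,3) q by auto
  then have x: "x \<in> {-1, 0, 1}" and y: "y \<in> {-1, 0, 1}" by auto
  show thesis
  proof (cases "x = 0 \<or> y = 0")
    case True
    then show thesis using that(1,2) x y q by (auto simp: complex_eq_iff)
  next
    case False
    let ?s = "Re z" and ?t = "Im z"
    note power2_le_quarter[OF assms(2)] power2_le_quarter[OF assms(3)]
    moreover have "x^2 = 1" "y^2 = 1" using False x y by auto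
    moreover have "(?s - x)^2 + (?t - y)^2 < 1" using assms(4) q by (simp add: cmod_less_1_iff)
    ultimately have "(?s - x)^2 + ?t^2 < 1 \<or> ?s^2 + (?t - y)^2 < 1"
      by (simp add: power2_diff) (smt (verit) of_int_power of_int_1)
    then have "cmod (z - of_int x) < 1 \<or> cmod (z - \<i> * of_int y) < 1"
      by (simp add: cmod_less_1_iff)
    moreover have "of_int x \<in> {1, -1 :: complex}" "\<i> * of_int y \<in> {\<i>, -\<i>}" "q = of_int x + \<i> * of_int y"
      using False x y q by (auto simp: complex_eq_iff)
    ultimately show thesis using that(3) by blast
  qed
qed

section \<open>Generators of \<open>SL(2,\<int>[i])\<close>\<close>

definition mat_upper :: "complex \<Rightarrow> cmat" where
  "mat_upper q = (1, q, 0, 1)"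

definition mat_lower :: "complex \<Rightarrow> cmat" where
  "mat_lower q = (1, 0, q, 1)"

lemmas mat_defs = mat_upper_def mat_lower_def mat_id_def matS_def matT_def matTw_def matL_def
  matU_def matE_def mmul_def mneg_def

lemma mneg_mneg [simp]: "mneg (mneg g) = g"
  by (cases g) (simp add: mneg_def)

lemma mmul_mneg_left: "mmul (mneg g) h = mneg (mmul g h)"
  and mmul_mneg_right: "mmul g (mneg h) = mneg (mmul g h)"
  by (cases g; cases h; simp add: mmul_def mneg_def)+

lemma mat_upper_add: "mmul (mat_upper a) (mat_upper b) = mat_upper (a + b)"
  by (simp add: mat_defs)

lemma mat_lower_add: "mmul (mat_lower a) (mat_lower b) = mat_lower (a + b)"
  by (simp add: mat_defs algebra_simps)

lemma SL2ZI_iff: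
  "(a, b, c, e) \<in> SL2ZI \<longleftrightarrow> gauss_int a \<and> gauss_int b \<and> gauss_int c \<and> gauss_int e \<and> a * e - b * c = 1"
  by (simp add: SL2ZI_def)

lemma SL2ZI_mmul:
  assumes "g \<in> SL2ZI" "h \<in> SL2ZI"
  shows "mmul g h \<in> SL2ZI"
proof -
  obtain a b c d a' b' c' d' where "g = (a, b, c, d)" "h = (a', b', c', d')"
    by (cases g; cases h)
  moreover have "(a*a' + b*c')*(c*b' + d*d') - (a*b' + b*d')*(c*a' + d*c') = (a*d - b*c)*(a'*d' - b'*c')"
    by (simp add: algebra_simps)
  ultimately show ?thesis using assms by (simp add: SL2ZI_iff mmul_def)
qed

lemma SL2ZI_generators [simp]:
  "matS \<in> SL2ZI" "matL \<in> SL2ZI" "mat_id \<in> SL2ZI" "gauss_int t \<Longrightarrow> mat_upper t \<in> SL2ZI"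
  by (simp_all add: SL2ZI_iff mat_defs)

lemma upper_triangular_cases:
  assumes "(a, b, 0, e) \<in> SL2ZI"
  obtains t where "gauss_int t"
    and "(a, b, 0, e) \<in> {mat_upper t, mneg (mat_upper t), mmul (mat_upper t) matL, mneg (mmul (mat_upper t) matL)}"
proof -
  have ae: "a * e = 1" and gauss: "gauss_int a" "gauss_int b" "gauss_int e"
    using assms by (auto simp: SL2ZI_iff)
  then have "e = 1 / a" by (auto simp: eq_divide_eq mult.commute)
  with gauss_int_unit[OF gauss(1,3) ae] have "(a, b, 0, e) \<in>
    {mat_upper (a*b), mneg (mat_upper (a*b)), mmul (mat_upper (a*b)) matL, mneg (mmul (mat_upper (a*b)) matL)}"
    by (auto simp: mat_defs algebra_simps)
  then show thesis using that[of "a * b"] gauss by simp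
qed

text \<open>Euclidean algorithm on the first column: \<open>g = T\<^sub>q S g'\<close>, where \<open>g'\<close> has bottom-left entry
  \<open>qc - a\<close>, which is smaller than \<open>c\<close> when \<open>q\<close> is \<open>a/c\<close> rounded.\<close>

lemma SL2ZI_induct [consumes 1, case_names upper L S mneg mmul]:
  assumes "g \<in> SL2ZI"
    and upper: "\<And>t. gauss_int t \<Longrightarrow> Q (mat_upper t)"
    and L: "Q matL"
    and S: "Q matS"
    and mneg: "\<And>g. Q g \<Longrightarrow> Q (mneg g)"
    and mmul: "\<And>g h. g \<in> SL2ZI \<Longrightarrow> h \<in> SL2ZI \<Longrightarrow> Q g \<Longrightarrow> Q h \<Longrightarrow> Q (mmul g h)"
  shows "Q g"
proof -
  obtain a b c e where g: "g = (a, b, c, e)" by (cases g)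
  have "(a, b, c, e) \<in> SL2ZI \<Longrightarrow> Q (a, b, c, e)"
  proof (induction "gnorm c" arbitrary: a b c e rule: less_induct)
    case less
    have gauss: "gauss_int a" "gauss_int b" "gauss_int c" "gauss_int e" and det: "a * e - b * c = 1"
      using less.prems by (auto simp: SL2ZI_iff)
    show ?case
    proof (cases "c = 0")
      case True
      then obtain t where t: "gauss_int t" and "(a, b, c, e) \<in>
          {mat_upper t, mneg (mat_upper t), mmul (mat_upper t) matL, mneg (mmul (mat_upper t) matL)}"
        using less.prems upper_triangular_cases by blast
      moreover have "Q (mmul (mat_upper t) matL)"
        using mmul[OF _ _ upper[OF t] L] t by simp
      ultimately show ?thesis
        using upper[OF t] by (elim insertE emptyE) (simp_all add: mneg)
    next
      case False
      define q where "q = gauss_round (a / c)"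
      let ?g' = "(c, e, q * c - a, q * e - b)"
      have "?g' \<in> SL2ZI" using gauss det by (simp add: SL2ZI_iff q_def algebra_simps)
      moreover have "Q ?g'"
        using less.hyps[OF _ \<open>?g' \<in> SL2ZI\<close>] gnorm_euclid_step[OF False gauss(3,1)] by (simp add: q_def)
      moreover have "(a, b, c, e) = mmul (mmul (mat_upper q) matS) ?g'"
        by (simp add: mat_defs)
      moreover have "gauss_int q" by (simp add: q_def)
      ultimately show ?thesis
        by (metis SL2ZI_generators SL2ZI_mmul S upper mmul)
    qed
  qed
  then show ?thesis using assms(1) g by simp
qed

lemma proj_mneg: "proj (mneg g) = proj g"
  by (auto simp: proj_def)

lemma pmul_proj: "pmul (proj g) (proj h) = proj (mmul g h)"
proof (intro set_eqI iffI)
  fix z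
  assume "z \<in> pmul (proj g) (proj h)"
  then obtain x y where "z = mmul x y" "x \<in> {g, mneg g}" "y \<in> {h, mneg h}"
    unfolding pmul_def proj_def by blast
  then show "z \<in> proj (mmul g h)"
    by (auto simp: proj_def mmul_mneg_left mmul_mneg_right)
next
  fix z
  assume "z \<in> proj (mmul g h)"
  then have "z = mmul g h \<or> z = mmul (mneg g) h"
    by (auto simp: proj_def mmul_mneg_left)
  then show "z \<in> pmul (proj g) (proj h)"
    unfolding pmul_def proj_def by blast
qed

lemma proj_in_PSL2ZI: "g \<in> SL2ZI \<Longrightarrow> proj g \<in> PSL2ZI"
  by (simp add: PSL2ZI_def)

lemma PSL2ZI_cases:
  assumes "X \<in> PSL2ZI"
  obtains g where "g \<in> SL2ZI" "X = proj g"
  using assms by (auto simp: PSL2ZI_def)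

lemma pslash_proj: "pslash k P (proj g) = slash k P g"
proof -
  have "(SOME x. x \<in> proj g) \<in> proj g" by (rule someI[of _ g]) (simp add: proj_def)
  then show ?thesis by (auto simp: pslash_def proj_def slash_mneg)
qed

section \<open>Parabolic cocycles\<close>

lemma Cp_mmul:
  assumes "F \<in> Cp k" "g \<in> SL2ZI" "h \<in> SL2ZI"
  shows "F (proj (mmul g h)) = slash k (F (proj g)) h + F (proj h)"
proof -
  have "F (pmul (proj g) (proj h)) = (\<lambda>m n. pslash k (F (proj g)) (proj h) m n + F (proj h) m n)"
    using assms proj_in_PSL2ZI unfolding Cp_def by blast
  then show ?thesis by (simp add: pmul_proj pslash_proj plus_fun_def)
qed

lemma Cp_in_Vkk: "F \<in> Cp k \<Longrightarrow> g \<in> SL2ZI \<Longrightarrow> F (proj g) \<in> Vkk k"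
  using proj_in_PSL2ZI unfolding Cp_def by blast

lemma Cp_outside: "F \<in> Cp k \<Longrightarrow> X \<notin> PSL2ZI \<Longrightarrow> F X = 0"
  unfolding Cp_def by (auto simp: zero_fun_def)

lemma Cp_T: "F \<in> Cp k \<Longrightarrow> F (proj matT) = 0"
  and Cp_Tw: "F \<in> Cp k \<Longrightarrow> F (proj matTw) = 0"
  and Cp_L: "F \<in> Cp k \<Longrightarrow> F (proj matL) = 0"
  unfolding Cp_def by (auto simp: zero_fun_def)

lemma Cp_id:
  assumes "F \<in> Cp k"
  shows "F (proj mat_id) = 0"
proof -
  have "mmul mat_id mat_id = mat_id" by (simp add: mat_defs)
  then have "F (proj mat_id) = slash k (F (proj mat_id)) mat_id + F (proj mat_id)"
    using Cp_mmul[OF assms SL2ZI_generators(3) SL2ZI_generators(3)] by simp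
  then show ?thesis
    using slash_id[OF Cp_in_Vkk[OF assms SL2ZI_generators(3)]] by simp
qed

lemma Cp_mat_upper_neg:
  assumes F: "F \<in> Cp k" and "gauss_int s" "F (proj (mat_upper s)) = 0"
  shows "F (proj (mat_upper (- s))) = 0"
  using Cp_mmul[OF F, of "mat_upper s" "mat_upper (- s)"] Cp_id[OF F] assms
  by (simp add: mat_upper_add slash_zero) (simp add: mat_defs)

lemma Cp_mat_upper_add:
  assumes F: "F \<in> Cp k" and "gauss_int s" "gauss_int t"
    and "F (proj (mat_upper s)) = 0" "F (proj (mat_upper t)) = 0"
  shows "F (proj (mat_upper (s + t))) = 0"
  using Cp_mmul[OF F, of "mat_upper s" "mat_upper t"] assms by (simp add: mat_upper_add slash_zero)

lemma Cp_mat_upper_int_multiple: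
  assumes F: "F \<in> Cp k" and s: "gauss_int s" "F (proj (mat_upper s)) = 0"
  shows "F (proj (mat_upper (of_int n * s))) = 0"
proof (induction n rule: int_induct[where k = 0])
  case base
  show ?case using Cp_id[OF F] by (simp add: mat_defs)
next
  case (step1 n)
  have "of_int (n + 1) * s = of_int n * s + s" by (simp add: distrib_right)
  then show ?case using Cp_mat_upper_add[OF F _ s(1) step1(2) s(2)] s(1) by simp
next
  case (step2 n)
  have "of_int (n - 1) * s = of_int n * s + - s" by (simp add: left_diff_distrib)
  then show ?case using Cp_mat_upper_add[OF F _ _ step2(2) Cp_mat_upper_neg[OF F s]] s(1) by simp
qed

lemma Cp_mat_upper:
  assumes F: "F \<in> Cp k" and "gauss_int t"
  shows "F (proj (mat_upper t)) = 0"
proof -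
  obtain a b :: int where t: "t = of_int a * 1 + of_int b * \<i>"
    using \<open>gauss_int t\<close> by (elim gauss_int_cases) (simp add: complex_eq_iff)
  have "F (proj (mat_upper 1)) = 0" "F (proj (mat_upper \<i>)) = 0"
    using Cp_T[OF F] Cp_Tw[OF F] by (simp_all add: mat_upper_def matT_def matTw_def)
  then have "F (proj (mat_upper (of_int a * 1))) = 0" "F (proj (mat_upper (of_int b * \<i>))) = 0"
    by (simp_all only: Cp_mat_upper_int_multiple[OF F] gauss_int_1 gauss_int_ii)
  from Cp_mat_upper_add[OF F _ _ this] show ?thesis
    unfolding t by simp
qed

lemma Cp_eqI:
  assumes F: "F \<in> Cp k" and G: "G \<in> Cp k" and S: "F (proj matS) = G (proj matS)"
  shows "F = G"
proof
  fix X
  show "F X = G X"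
  proof (cases "X \<in> PSL2ZI")
    case True
    then obtain g where "g \<in> SL2ZI" "X = proj g" by (rule PSL2ZI_cases)
    from this(1) have "F (proj g) = G (proj g)"
    proof (induction rule: SL2ZI_induct)
      case (upper t)
      then show ?case using Cp_mat_upper[OF F] Cp_mat_upper[OF G] by simp
    next
      case L
      then show ?case using Cp_L[OF F] Cp_L[OF G] by simp
    next
      case (mneg g)
      then show ?case by (simp add: proj_mneg)
    next
      case (mmul g h)
      then show ?case using Cp_mmul[OF F] Cp_mmul[OF G] by simp
    qed (fact S)
    then show ?thesis using \<open>X = proj g\<close> by simp
  next
    case False
    then show ?thesis using Cp_outside[OF F] Cp_outside[OF G] by simp
  qed
qed

lemma Cp_order2:
  assumes F: "F \<in> Cp k" and g: "g \<in> SL2ZI" and "mmul g g = mneg mat_id"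
  shows "slash k (F (proj g)) g + F (proj g) = 0"
  using Cp_mmul[OF F g g] Cp_id[OF F] assms(3) by (simp add: proj_mneg)

lemma Cp_order3:
  assumes F: "F \<in> Cp k" and g: "g \<in> SL2ZI" and "mmul (mmul g g) g \<in> {mat_id, mneg mat_id}"
  shows "F (proj g) + slash k (F (proj g)) g + slash k (F (proj g)) (mmul g g) = 0"
proof -
  have "F (proj (mmul (mmul g g) g)) = 0"
    using assms(3) Cp_id[OF F] by (auto simp: proj_mneg)
  then show ?thesis
    using Cp_mmul[OF F SL2ZI_mmul[OF g g] g] Cp_mmul[OF F g g]
    by (simp add: slash_add slash_mmul add_ac)
qed

lemma Cp_S_in_Wkk:
  assumes F: "F \<in> Cp k"
  shows "F (proj matS) \<in> Wkk k"
proof -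
  let ?P = "F (proj matS)"
  have S: "slash k ?P matS + ?P = 0"
    by (rule Cp_order2[OF F]) (simp_all add: mat_defs SL2ZI_iff)
  have SL: "mmul matS matL \<in> SL2ZI" by (simp add: SL2ZI_mmul)
  have "slash k (F (proj (mmul matS matL))) (mmul matS matL) + F (proj (mmul matS matL)) = 0"
    by (rule Cp_order2[OF F SL]) (simp add: mat_defs)
  moreover have "F (proj (mmul matS matL)) = slash k ?P matL"
    using Cp_mmul[OF F, of matS matL] Cp_L[OF F] by simp
  moreover have "mmul matL (mmul matS matL) = matS"
    by (simp add: mat_defs)
  ultimately have "slash k ?P matS + slash k ?P matL = 0"
    by (simp add: slash_mmul)
  with S have L: "slash k ?P matL = ?P"
    by (metis add.commute add_left_cancel)
  have "F (proj matU) = ?P"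
    using Cp_mmul[OF F, of matT matS] Cp_T[OF F] by (simp add: matU_def slash_zero matT_def SL2ZI_iff)
  then have U: "?P + slash k ?P matU + slash k ?P (mmul matU matU) = 0"
    using Cp_order3[OF F, of matU] by (simp add: mat_defs SL2ZI_iff)
  have "F (proj (mmul matTw matS)) = ?P"
    using Cp_mmul[OF F, of matTw matS] Cp_Tw[OF F] by (simp add: slash_zero matTw_def SL2ZI_iff)
  then have "F (proj matE) = ?P"
    using Cp_mmul[OF F, of "mmul matTw matS" matL] Cp_L[OF F] L
    by (simp add: matE_def SL2ZI_mmul matTw_def SL2ZI_iff)
  then have E: "?P + slash k ?P matE + slash k ?P (mmul matE matE) = 0"
    using Cp_order3[OF F, of matE] by (simp add: mat_defs SL2ZI_iff)
  show ?thesis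
    using Cp_in_Vkk[OF F] S L U E
    by (simp add: Wkk_def fun_eq_iff add.commute)
qed

text \<open>The value, at any matrix with bottom row \<open>(c, d)\<close>, of the cocycle \<open>f\<close> with \<open>f(S) = P\<close>:
  such a matrix is \<open>g S T\<^sub>q\<close> with \<open>g\<close> of bottom row \<open>(qc - d, c)\<close>, so the cocycle relation
  forces \<open>f(g S T\<^sub>q) = (f(g)|S + P)|T\<^sub>q\<close>; the rounded quotient \<open>q\<close> makes this a recursion.\<close>

function cocycle_row :: "nat \<Rightarrow> vpoly \<Rightarrow> complex \<Rightarrow> complex \<Rightarrow> vpoly" where
  "cocycle_row k P c d =
    (if c = 0 \<or> \<not> gauss_int c \<or> \<not> gauss_int d then 0
     else slash k (slash k (cocycle_row k P (gauss_round (d/c) * c - d) c) matS + P)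
            (mat_upper (gauss_round (d/c))))"
  by auto
termination
  by (relation "measure (\<lambda>(k, P, c, d). gnorm c)") (auto intro: gnorm_euclid_step)

declare cocycle_row.simps [simp del]

lemma cocycle_row_scale:
  assumes "gauss_int u" "u \<noteq> 0"
  shows "gauss_int c \<Longrightarrow> gauss_int d \<Longrightarrow> cocycle_row k P (u * c) (u * d) = cocycle_row k P c d"
proof (induction k P c d rule: cocycle_row.induct)
  case (1 k P c d)
  show ?case
  proof (cases "c = 0")
    case False
    have "gauss_round (d/c) * (u * c) - u * d = u * (gauss_round (d/c) * c - d)"
      by (simp add: algebra_simps)
    with 1 False assms show ?thesis
      by (subst (1 2) cocycle_row.simps) simp
  qed (simp add: cocycle_row.simps)
qed

lemma cocycle_row_neg [simp]: "cocycle_row k P (- c) (- d) = cocycle_row k P c d"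
proof (cases "gauss_int c \<and> gauss_int d")
  case True
  then show ?thesis using cocycle_row_scale[of "-1" c d] by simp
qed (auto simp: cocycle_row.simps)

locale Wkk_element =
  fixes k :: nat and P :: vpoly
  assumes P_in_Wkk: "P \<in> Wkk k"
begin

abbreviation h :: "complex \<Rightarrow> complex \<Rightarrow> vpoly" where
  "h \<equiv> cocycle_row k P"

abbreviation sl :: "vpoly \<Rightarrow> cmat \<Rightarrow> vpoly" where
  "sl \<equiv> slash k"

lemma P_in_Vkk: "P \<in> Vkk k"
  and P_slash_S: "sl P matS = - P"
  and P_slash_L: "sl P matL = P"
  and P_U_relation: "P + sl P matU + sl P (mmul matU matU) = 0"
  and P_E_relation: "P + sl P matE + sl P (mmul matE matE) = 0"
  using P_in_Wkk unfolding Wkk_def by (auto simp: fun_eq_iff add_eq_0_iff)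

lemma slash_P_S_left: "sl P (mmul matS g) = - sl P g"
  by (simp flip: slash_mmul add: P_slash_S slash_uminus)

lemma slash_P_L_left: "sl P (mmul matL g) = sl P g"
  by (simp flip: slash_mmul add: P_slash_L)

lemma h_in_Vkk: "h c d \<in> Vkk k"
  by (subst cocycle_row.simps) (simp add: zero_in_Vkk slash_in_Vkk)

lemma h_zero_left [simp]: "h 0 d = 0"
  by (simp add: cocycle_row.simps)

definition row_step :: "complex \<Rightarrow> complex \<Rightarrow> complex \<Rightarrow> vpoly" where
  "row_step c d q = sl (sl (h (q * c - d) c) matS + P) (mat_upper q)"

lemma h_eq_row_step: "c \<noteq> 0 \<Longrightarrow> gauss_int c \<Longrightarrow> gauss_int d \<Longrightarrow> h c d = row_step c d (gauss_round (d/c))"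
  by (subst cocycle_row.simps) (simp add: row_step_def)

lemma row_step_zero: "row_step c d 0 = sl (h (- d) c) matS + P"
proof -
  have "mat_upper 0 = mat_id" by (simp add: mat_defs)
  then show ?thesis
    by (simp add: row_step_def slash_id add_in_Vkk slash_in_Vkk P_in_Vkk)
qed

lemma h_1_0: "h 1 0 = P"
  using h_eq_row_step[of 1 0] by (simp add: row_step_zero slash_zero)

lemma row_step_translate: "row_step c (d + t * c) (q + t) = sl (row_step c d q) (mat_upper t)"
  unfolding row_step_def slash_mmul mat_upper_add by (simp add: algebra_simps)

lemma h_translate:
  assumes "gauss_int c" "gauss_int d" "gauss_int t"
  shows "h c (d + t * c) = sl (h c d) (mat_upper t)"
proof (cases "c = 0")
  case False
  then have "gauss_round ((d + t * c) / c) = gauss_round (d/c) + t"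
    using gauss_round_add[OF assms(3), of "d/c"] by (simp add: add_divide_distrib)
  then show ?thesis
    using h_eq_row_step[of c] False assms by (simp add: row_step_translate)
qed (simp add: slash_zero)

lemma h_scale: "gauss_int u \<Longrightarrow> u \<noteq> 0 \<Longrightarrow> gauss_int c \<Longrightarrow> gauss_int d \<Longrightarrow> h (u * c) (u * d) = h c d"
  by (rule cocycle_row_scale)

lemma slash_upper_L: "sl v (mmul (mat_upper t) matL) = sl (sl v matL) (mat_upper (- t))"
proof -
  have "mmul (mat_upper t) matL = mmul matL (mat_upper (- t))" by (simp add: mat_defs)
  then show ?thesis by (simp add: slash_mmul)
qed

text \<open>The value of the sought cocycle at the lower unipotent matrix \<open>(1, 0; a, 1) = -S T\<^bsub>-a\<^esub> S\<close>.\<close>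

definition lower_val :: "complex \<Rightarrow> vpoly" where
  "lower_val a = P + sl P (mmul (mat_upper (- a)) matS)"

lemma lower_val_0: "lower_val 0 = 0"
proof -
  have "mmul (mat_upper 0) matS = matS" by (simp add: mat_defs)
  then show ?thesis by (simp add: lower_val_def P_slash_S)
qed

lemma lower_val_add: "sl (lower_val a) (mat_lower b) + lower_val b = lower_val (a + b)"
proof -
  have "mat_lower b = mneg (mmul matS (mmul (mat_upper (- b)) matS))"
    by (simp add: mat_defs)
  then have "sl P (mat_lower b) = - sl P (mmul (mat_upper (- b)) matS)"
    by (simp add: slash_mneg slash_P_S_left)
  moreover have "mmul (mmul (mat_upper (- a)) matS) (mat_lower b) = mmul (mat_upper (- (a + b))) matS"
    by (simp add: mat_defs algebra_simps)
  ultimately show ?thesis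
    by (simp add: lower_val_def slash_add slash_mmul algebra_simps)
qed

lemma lower_val_S_upper: "sl (lower_val d) (mmul matS (mat_upper d)) + sl P (mat_upper d) = P"
proof -
  have "mmul (mmul (mat_upper (- d)) matS) (mmul matS (mat_upper d)) = mneg mat_id"
    by (simp add: mat_defs)
  then show ?thesis
    by (simp add: lower_val_def slash_add slash_mmul slash_mneg slash_id P_in_Vkk slash_P_S_left)
qed

lemma lower_val_slash_L: "sl (lower_val a) matL = lower_val (- a)"
proof -
  have "mmul (mmul (mat_upper (- a)) matS) matL = mneg (mmul matL (mmul (mat_upper a) matS))"
    by (simp add: mat_defs)
  then show ?thesis
    by (simp add: lower_val_def slash_add slash_mmul slash_mneg slash_P_L_left P_slash_L)
qed

text \<open>The relations \<open>U\<^sup>3 = \<plusminus>1\<close> and \<open>E\<^sup>3 = \<plusminus>1\<close> in their working form; conjugation by \<open>L\<close> adds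
  the other two units.\<close>

lemma lower_val_unit:
  "lower_val 1 = sl P (mat_upper 1)" "lower_val (- 1) = sl P (mat_upper (- 1))"
  "lower_val \<i> = sl P (mat_upper (- \<i>))" "lower_val (- \<i>) = sl P (mat_upper \<i>)"
proof -
  have "matU = mmul (mat_upper 1) matS" "mmul matU matU = mmul matS (mat_upper (- 1))"
    by (simp_all add: mat_defs)
  then have "P + sl P (mmul (mat_upper 1) matS) - sl P (mat_upper (- 1)) = 0"
    using P_U_relation by (simp add: slash_P_S_left)
  then show m1: "lower_val (- 1) = sl P (mat_upper (- 1))"
    by (simp add: lower_val_def algebra_simps)
  have E: "matE = mneg (mmul matL (mmul (mat_upper (- \<i>)) matS))"
    and EE: "mmul matE matE = mmul matL (mmul matS (mat_upper (- \<i>)))"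
    by (simp_all add: mat_defs)
  have "sl P matE = sl P (mmul (mat_upper (- \<i>)) matS)"
    unfolding E slash_mneg slash_P_L_left ..
  moreover have "sl P (mmul matE matE) = - sl P (mat_upper (- \<i>))"
    unfolding EE slash_P_L_left slash_P_S_left ..
  ultimately have "P + sl P (mmul (mat_upper (- \<i>)) matS) - sl P (mat_upper (- \<i>)) = 0"
    using P_E_relation by simp
  then show mi: "lower_val \<i> = sl P (mat_upper (- \<i>))"
    by (simp add: lower_val_def algebra_simps)
  have L_conj: "sl (sl P (mat_upper t)) matL = sl P (mat_upper (- t))" for t
    using slash_upper_L[of P t] by (simp add: slash_mmul slash_P_L_left)
  show "lower_val 1 = sl P (mat_upper 1)"
    using arg_cong[OF m1, of "\<lambda>v. sl v matL"] by (simp add: lower_val_slash_L L_conj)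
  show "lower_val (- \<i>) = sl P (mat_upper \<i>)"
    using arg_cong[OF mi, of "\<lambda>v. sl v matL"] by (simp add: lower_val_slash_L L_conj)
qed

text \<open>For a unit \<open>u\<close> the lower unipotent \<open>(1, 0; u, 1)\<close> is \<open>\<plusminus>T\<^bsub>1/u\<^esub> S T\<^sub>u\<close> if \<open>u\<^sup>2 = 1\<close> and
  \<open>\<plusminus>T\<^bsub>1/u\<^esub> S T\<^sub>u L\<close> if \<open>u\<^sup>2 = -1\<close>; here \<open>1/u\<close> is written \<open>cnj u\<close>.\<close>

lemma h_lower_unit:
  assumes u: "u \<in> {1, -1, \<i>, -\<i>}" and x: "gauss_int x" and y: "gauss_int y"
    and S: "h (y + cnj u * x) (- x) = sl (h x (y + cnj u * x)) matS + P"
    and L: "h (x + u * y) y = sl (h (x + u * y) (- y)) matL"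
  shows "h (x + u * y) y = sl (h x y) (mat_lower u) + lower_val u"
proof -
  note unit = gauss_unitD[OF u]
  have "- x + u * (y + cnj u * x) = u * y" "u * (y + cnj u * x) = x + u * y"
    using unit(3) by (simp_all add: algebra_simps)
  then have "h (x + u * y) (u * (u * y)) = sl (h (y + cnj u * x) (- x)) (mat_upper u)"
    using h_translate[of "y + cnj u * x" "- x" u] h_scale[of u "y + cnj u * x" "u * y"] x y unit
    by auto
  also have "\<dots> = sl (h x y) (mmul (mmul (mat_upper (cnj u)) matS) (mat_upper u)) + sl P (mat_upper u)"
    using h_translate[of x y "cnj u"] x y unit by (simp add: S slash_add slash_mmul add.commute)
  finally have row: "h (x + u * y) (u * (u * y))
      = sl (h x y) (mmul (mmul (mat_upper (cnj u)) matS) (mat_upper u)) + sl P (mat_upper u)" .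
  from u consider "u \<in> {1, -1}" | "u \<in> {\<i>, -\<i>}" by blast
  then show ?thesis
  proof cases
    case 1
    then have yy: "u * (u * y) = y" by auto
    from 1 have "mmul (mmul (mat_upper (cnj u)) matS) (mat_upper u) \<in> {mat_lower u, mneg (mat_lower u)}"
      and "sl P (mat_upper u) = lower_val u"
      by (auto simp: mat_defs lower_val_unit)
    with row[unfolded yy] show ?thesis by (auto simp: slash_mneg)
  next
    case 2
    then have yy: "u * (u * y) = - y" by auto
    from 2 have "mmul (mmul (mmul (mat_upper (cnj u)) matS) (mat_upper u)) matL \<in> {mat_lower u, mneg (mat_lower u)}"
      by (auto simp: mat_defs)
    moreover from 2 have "sl P (mmul (mat_upper u) matL) = lower_val u"
      by (auto simp: lower_val_unit slash_upper_L P_slash_L)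
    ultimately show ?thesis using row[unfolded yy] L by (auto simp: slash_add slash_mmul slash_mneg)
  qed
qed

lemma h_lower_add:
  assumes "h (x + a * y) y = sl (h x y) (mat_lower a) + lower_val a"
    and "h ((x + a * y) + b * y) y = sl (h (x + a * y) y) (mat_lower b) + lower_val b"
  shows "h (x + (a + b) * y) y = sl (h x y) (mat_lower (a + b)) + lower_val (a + b)"
proof -
  have "h (x + (a + b) * y) y = h ((x + a * y) + b * y) y" by (simp add: algebra_simps)
  also have "\<dots> = sl (sl (h x y) (mat_lower a) + lower_val a) (mat_lower b) + lower_val b"
    using assms by simp
  also have "\<dots> = sl (h x y) (mat_lower (a + b)) + (sl (lower_val a) (mat_lower b) + lower_val b)"
    by (simp add: slash_add slash_mmul mat_lower_add add.assoc)
  finally show ?thesis by (simp add: lower_val_add)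
qed

lemma row_step_eq_row_step_zero:
  assumes "h (- d + q * c) c = sl (h (- d) c) (mat_lower q) + lower_val q"
  shows "row_step c d q = row_step c d 0"
proof -
  have "mmul (mmul (mat_lower q) matS) (mat_upper q) = matS" by (simp add: mat_defs)
  then have "row_step c d q = sl (h (- d) c) matS
      + (sl (lower_val q) (mmul matS (mat_upper q)) + sl P (mat_upper q))"
    using assms by (simp add: row_step_def slash_add slash_mmul add.assoc)
  then show ?thesis by (simp add: lower_val_S_upper row_step_zero)
qed

section \<open>Independence of the Euclidean quotient\<close>

text \<open>The recursion uses the rounded quotient, but the \<open>S\<close>- and \<open>L\<close>-relations need every quotient
  \<open>q\<close> with \<open>|d/c - q| < 1\<close> to give the same value. This independence and the two relations are
  proved together, by induction on the norm of \<open>c\<close>.\<close>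

definition quotient_indep :: "nat \<Rightarrow> bool" where
  "quotient_indep n \<longleftrightarrow> (\<forall>c d q. gauss_int c \<longrightarrow> gauss_int d \<longrightarrow> gauss_int q \<longrightarrow> c \<noteq> 0 \<longrightarrow>
      gnorm c < n \<longrightarrow> gnorm (d - q * c) < gnorm c \<longrightarrow> h c d = row_step c d q)"

lemma quotient_indepD:
  "quotient_indep n \<Longrightarrow> gauss_int c \<Longrightarrow> gauss_int d \<Longrightarrow> gauss_int q \<Longrightarrow> c \<noteq> 0 \<Longrightarrow>
    gnorm c < n \<Longrightarrow> gnorm (d - q * c) < gnorm c \<Longrightarrow> h c d = row_step c d q"
  unfolding quotient_indep_def by blast

lemma h_L_below:
  assumes QI: "quotient_indep n"
  shows "gauss_int x \<Longrightarrow> gauss_int y \<Longrightarrow> gnorm x < n \<Longrightarrow> h x (- y) = sl (h x y) matL"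
proof (induction "gnorm x" arbitrary: x y rule: less_induct)
  case less
  show ?case
  proof (cases "x = 0")
    case True
    then show ?thesis by (simp add: slash_zero)
  next
    case False
    define q where "q = gauss_round (y / x)"
    let ?R = "h (q * x - y) x"
    have less_x: "gnorm (q * x - y) < gnorm x"
      using gnorm_euclid_step[OF False less.prems(1,2)] by (simp add: q_def)
    have "gnorm (- y - (- q) * x) < gnorm x"
      using less_x by (simp add: gnorm_minus_commute algebra_simps)
    then have "h x (- y) = row_step x (- y) (- q)"
      using quotient_indepD[OF QI] less.prems False by (simp add: q_def)
    also have "\<dots> = sl (sl (sl ?R matL) matS + P) (mat_upper (- q))"
    proof -
      have "h (q * x - y) (- x) = sl ?R matL"
        using less.hyps[OF less_x, of x] less.prems less_x by (simp add: q_def)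
      then have "h (- q * x - - y) x = sl ?R matL"
        using cocycle_row_neg[of k P "q * x - y" "- x"] by (simp add: algebra_simps)
      then show ?thesis by (simp add: row_step_def)
    qed
    also have "\<dots> = sl ?R (mmul (mmul matS (mat_upper q)) matL) + sl P (mmul (mat_upper q) matL)"
    proof -
      have "mmul (mmul matL matS) (mat_upper (- q)) = mneg (mmul (mmul matS (mat_upper q)) matL)"
        by (simp add: mat_defs)
      then show ?thesis
        by (simp add: slash_add slash_mmul slash_mneg slash_upper_L P_slash_L)
    qed
    also have "\<dots> = sl (h x y) matL"
      using h_eq_row_step[OF False less.prems(1,2)] by (simp add: q_def row_step_def slash_add slash_mmul)
    finally show ?thesis .
  qed
qed

lemma h_S_below_less:
  assumes QI: "quotient_indep n" and x: "gauss_int x" and y: "gauss_int y"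
    and "gnorm x < gnorm y" "gnorm y < n"
  shows "h y (- x) = sl (h x y) matS + P"
proof -
  have "y \<noteq> 0" using assms(4) by auto
  then have "h y (- x) = row_step y (- x) 0"
    using quotient_indepD[OF QI y _ _ _ assms(5), of "- x" 0] x assms(4) by simp
  then show ?thesis by (simp add: row_step_zero)
qed

lemma h_S_below_greater:
  assumes QI: "quotient_indep n" and x: "gauss_int x" and y: "gauss_int y"
    and "gnorm y < gnorm x" "gnorm x < n"
  shows "h y (- x) = sl (h x y) matS + P"
proof -
  have "mmul matS matS = mneg mat_id" by (simp add: mat_defs)
  moreover have "h x y = sl (h y (- x)) matS + P"
    using h_S_below_less[OF QI y, of "- x"] x assms(4,5) by simp
  ultimately show ?thesis
    by (simp add: slash_add slash_mmul slash_mneg slash_id h_in_Vkk P_slash_S)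
qed

lemma h_S_below_tie:
  assumes QI: "quotient_indep n" and x: "gauss_int x" and y: "gauss_int y"
    and tie: "gnorm x = gnorm y" and "x \<noteq> 0" and below: "gnorm x < n"
  shows "h y (- x) = sl (h x y) matS + P"
proof -
  have "cmod y = cmod x"
    using tie x y by (simp add: gnorm_eq_iff)
  with \<open>x \<noteq> 0\<close> have "cmod (y / x) = 1"
    by (simp add: norm_divide)
  then obtain u where u: "u \<in> {1, -1, \<i>, -\<i>}" and "cmod (y / x - u) < 1"
    using exists_unit_near_unit_circle by blast
  note unit = gauss_unitD[OF u]
  then have "gnorm (y - u * x) < gnorm x"
    using gnorm_diff_mult_less_iff[OF \<open>x \<noteq> 0\<close> x y] \<open>cmod (y / x - u) < 1\<close> by simp
  then have row: "h x y = sl (sl (h (u * x - y) x) matS + P) (mat_upper u)"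
    using quotient_indepD[OF QI x y unit(1) \<open>x \<noteq> 0\<close> below] by (simp add: row_step_def)
  define x' where "x' = u * x - y"
  have x': "gauss_int x'" "gnorm x' < gnorm y"
    using x y unit \<open>gnorm (y - u * x) < gnorm x\<close> tie by (simp_all add: x'_def gnorm_minus_commute)
  have "x + cnj (- u) * x' = cnj u * y" "x' + - u * x = - y"
    using unit(3) by (simp_all add: x'_def algebra_simps)
  moreover have "h (cnj u * y) (- x') = sl (h x' (cnj u * y)) matS + P"
    using h_S_below_less[OF QI x'(1), of "cnj u * y"] x' y unit below tie by (simp add: gnorm_mult_unit)
  moreover have "h (- y) x = sl (h (- y) (- x)) matL"
    using h_L_below[OF QI, of "- y" "- x"] x y below tie by simp
  ultimately have "h (- y) x = sl (h x' x) (mat_lower (- u)) + lower_val (- u)"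
    using h_lower_unit[of "- u" x' x] u x'(1) x by auto
  moreover have "mmul (mmul matS (mat_upper u)) matS = mneg (mat_lower (- u))"
    by (simp add: mat_defs)
  ultimately show ?thesis
    using cocycle_row_neg[of k P y "- x"] row
    by (simp add: x'_def lower_val_def slash_add slash_mmul slash_mneg add_ac)
qed

lemma h_S_below:
  assumes QI: "quotient_indep n" and x: "gauss_int x" and y: "gauss_int y"
    and "x \<noteq> 0 \<or> y \<noteq> 0" "gnorm x < n" "gnorm y < n"
  shows "h y (- x) = sl (h x y) matS + P"
proof -
  consider "gnorm x < gnorm y" | "gnorm y < gnorm x" | "gnorm x = gnorm y" "x \<noteq> 0"
    using assms(4) gnorm_eq_0_iff[OF x] gnorm_eq_0_iff[OF y] by force
  then show ?thesis
    by cases (use h_S_below_less[OF QI x y] h_S_below_greater[OF QI x y] h_S_below_tie[OF QI x y] assms in auto)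
qed

lemma h_lower_unit_below:
  assumes QI: "quotient_indep n" and u: "u \<in> {1, -1, \<i>, -\<i>}"
    and c: "gauss_int c" "c \<noteq> 0" and d: "gauss_int d"
    and "gnorm d < n" "gnorm (d - u * c) < n"
  shows "h (- d + u * c) c = sl (h (- d) c) (mat_lower u) + lower_val u"
proof -
  note unit = gauss_unitD[OF u]
  have "c - cnj u * d = - cnj u * (d - u * c)"
    using unit(3) by (simp add: algebra_simps)
  then have "gnorm (c - cnj u * d) < n"
    using assms(7) unit(6) by (simp add: gnorm_mult_unit)
  then have "h (c + cnj u * - d) (- (- d)) = sl (h (- d) (c + cnj u * - d)) matS + P"
    using h_S_below[OF QI, of "- d" "c + cnj u * - d"] c d unit assms(6) by auto
  moreover have "h (- d + u * c) c = sl (h (- d + u * c) (- c)) matL"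
    using h_L_below[OF QI, of "- d + u * c" "- c"] c d unit assms(7)
    by (simp add: gnorm_minus_commute[of d])
  ultimately show ?thesis
    using h_lower_unit[OF u, of "- d" c] c d by simp
qed

lemma h_lower_centered_below:
  assumes QI: "quotient_indep n" and c: "gauss_int c" "c \<noteq> 0" "gnorm c \<le> n"
    and d: "gauss_int d" "\<bar>Re (d / c)\<bar> \<le> 1/2" "\<bar>Im (d / c)\<bar> \<le> 1/2"
    and q: "gauss_int q" "cmod (d / c - q) < 1"
  shows "h (- d + q * c) c = sl (h (- d) c) (mat_lower q) + lower_val q"
proof -
  have below: "gnorm (d - t * c) < n" if "gauss_int t" "cmod (d / c - t) < 1" for t
    using gnorm_diff_mult_less_iff[OF c(2,1) d(1) that(1)] that(2) c(3) by simp
  have unit: "h (- d' + u * c) c = sl (h (- d') c) (mat_lower u) + lower_val u"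
    if "u \<in> {1, -1, \<i>, -\<i>}" "gauss_int d'" "gnorm d' < n" "gnorm (d' - u * c) < n" for u d'
    using h_lower_unit_below[OF QI that(1) c(1,2) that(2-4)] .
  have d_below: "gnorm d < n"
    using below[of 0] cmod_less_1_if_centered[OF d(2,3)] by simp
  have corner: "h (- d + (a + b) * c) c = sl (h (- d) c) (mat_lower (a + b)) + lower_val (a + b)"
    if "a \<in> {1, -1, \<i>, -\<i>}" "b \<in> {1, -1, \<i>, -\<i>}" "cmod (d / c - a) < 1" "cmod (d / c - (a + b)) < 1"
    for a b
  proof (rule h_lower_add)
    show "h (- d + a * c) c = sl (h (- d) c) (mat_lower a) + lower_val a"
      using unit[OF that(1) d(1) d_below below[OF _ that(3)]] gauss_unitD(1)[OF that(1)] by simp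
    have "gnorm (d - a * c) < n" "gnorm ((d - a * c) - b * c) < n"
      using below[of a] below[of "a + b"] that gauss_unitD(1)[OF that(1)] gauss_unitD(1)[OF that(2)]
      by (simp_all add: algebra_simps)
    then show "h (- d + a * c + b * c) c = sl (h (- d + a * c) c) (mat_lower b) + lower_val b"
      using unit[OF that(2), of "d - a * c"] c(1) d(1) gauss_unitD(1)[OF that(1)] by simp
  qed
  from q(1) d(2,3) q(2) show ?thesis
  proof (cases rule: near_centered_cases)
    case 1
    have "mat_lower 0 = mat_id" by (simp add: mat_defs)
    with 1 show ?thesis by (simp add: lower_val_0 slash_id h_in_Vkk)
  next
    case 2
    then show ?thesis using unit[OF 2 d(1) d_below below[OF q]] by simp
  next
    case (3 a b)
    then show ?thesis using corner[of a b] corner[of b a] q(2) by (auto simp: add.commute)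
  qed
qed

lemma quotient_indep_Suc:
  assumes QI: "quotient_indep n"
  shows "quotient_indep (Suc n)"
  unfolding quotient_indep_def
proof (intro allI impI)
  fix c d q
  assume c: "gauss_int c" "c \<noteq> 0" "gnorm c < Suc n" and d: "gauss_int d" and q: "gauss_int q"
    and "gnorm (d - q * c) < gnorm c"
  define q0 where "q0 = gauss_round (d / c)"
  define d0 where "d0 = d - q0 * c"
  have d0c: "d0 / c = d / c - q0" using c(2) by (simp add: d0_def q0_def field_simps)
  have d0: "gauss_int d0" "gauss_round (d0 / c) = 0"
    using c d by (simp add: d0_def q0_def)
      (use gauss_round_add[of "- q0" "d / c"] in \<open>simp add: d0c q0_def\<close>)
  have "cmod (d / c - q) < 1"
    using gnorm_diff_mult_less_iff[OF c(2,1) d q] \<open>gnorm (d - q * c) < gnorm c\<close> by simp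
  then have "h (- d0 + (q - q0) * c) c = sl (h (- d0) c) (mat_lower (q - q0)) + lower_val (q - q0)"
    using h_lower_centered_below[OF QI c(1,2) _ d0(1), of "q - q0"] gauss_round_bounds[of "d / c"] c(3) q
    by (simp add: d0c q0_def)
  then have "h c d0 = row_step c d0 (q - q0)"
    using h_eq_row_step[OF c(2,1) d0(1)] by (simp add: d0(2) row_step_eq_row_step_zero)
  moreover have "h c d = sl (h c d0) (mat_upper q0)"
    using h_translate[OF c(1) d0(1), of q0] by (simp add: d0_def q0_def)
  moreover have "sl (row_step c d0 (q - q0)) (mat_upper q0) = row_step c d q"
    using row_step_translate[of c d0 q0 "q - q0"] by (simp add: d0_def)
  ultimately show "h c d = row_step c d q"
    by simp
qed

lemma quotient_indep: "quotient_indep n"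
proof (induction n)
  case 0
  show ?case by (simp add: quotient_indep_def)
next
  case (Suc n)
  then show ?case by (rule quotient_indep_Suc)
qed

lemma h_L: "gauss_int x \<Longrightarrow> gauss_int y \<Longrightarrow> h x (- y) = sl (h x y) matL"
  using h_L_below[OF quotient_indep[of "Suc (gnorm x)"]] by simp

lemma h_S: "gauss_int x \<Longrightarrow> gauss_int y \<Longrightarrow> x \<noteq> 0 \<or> y \<noteq> 0 \<Longrightarrow> h y (- x) = sl (h x y) matS + P"
  using h_S_below[OF quotient_indep[of "Suc (gnorm x + gnorm y)"]] by simp

end

section \<open>The cocycle relation\<close>

definition row_mmul :: "complex \<times> complex \<Rightarrow> cmat \<Rightarrow> complex \<times> complex" where
  "row_mmul v g = (case v of (x, y) \<Rightarrow> case g of (a, b, c, e) \<Rightarrow> (x * a + y * c, x * b + y * e))"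

definition row2 :: "cmat \<Rightarrow> complex \<times> complex" where
  "row2 g = (case g of (a, b, c, e) \<Rightarrow> (c, e))"

definition nonzero_gauss_rows :: "(complex \<times> complex) set" where
  "nonzero_gauss_rows = {(x, y). gauss_int x \<and> gauss_int y \<and> (x \<noteq> 0 \<or> y \<noteq> 0)}"

lemma row_mmul_mmul: "row_mmul v (mmul g h) = row_mmul (row_mmul v g) h"
  by (cases v; cases g; cases h) (simp add: row_mmul_def mmul_def algebra_simps)

lemma row2_mmul: "row2 (mmul g h) = row_mmul (row2 g) h"
  by (cases g; cases h) (simp add: row_mmul_def row2_def mmul_def)

lemma row_mmul_mneg: "row_mmul v (mneg g) = (- fst (row_mmul v g), - snd (row_mmul v g))"
  and row2_mneg: "row2 (mneg g) = (- fst (row2 g), - snd (row2 g))"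
  by (cases v; cases g; simp add: row_mmul_def row2_def mneg_def)+

lemma row_mmul_in_nonzero_gauss_rows:
  assumes "v \<in> nonzero_gauss_rows" "g \<in> SL2ZI"
  shows "row_mmul v g \<in> nonzero_gauss_rows"
proof -
  obtain x y a b c e where v: "v = (x, y)" and g: "g = (a, b, c, e)" by (cases v; cases g)
  have "x * (a * e - b * c) = e * (x * a + y * c) - c * (x * b + y * e)"
    "y * (a * e - b * c) = a * (x * b + y * e) - b * (x * a + y * c)"
    by (simp_all add: algebra_simps)
  moreover have "a * e - b * c = 1" using assms(2) by (simp add: g SL2ZI_iff)
  ultimately have "x = e * (x * a + y * c) - c * (x * b + y * e)" "y = a * (x * b + y * e) - b * (x * a + y * c)"
    by simp_all
  then show ?thesis
    using assms by (auto simp: v g nonzero_gauss_rows_def row_mmul_def SL2ZI_iff)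
qed

lemma row2_in_nonzero_gauss_rows: "g \<in> SL2ZI \<Longrightarrow> row2 g \<in> nonzero_gauss_rows"
  by (cases g) (auto simp: row2_def nonzero_gauss_rows_def SL2ZI_iff)

context Wkk_element
begin

lemma h_cocycle:
  assumes "g \<in> SL2ZI" "v \<in> nonzero_gauss_rows"
  shows "case_prod h (row_mmul v g) = sl (case_prod h v) g + case_prod h (row2 g)"
  using assms
proof (induct arbitrary: v rule: SL2ZI_induct)
  case (upper t)
  then show ?case
    using h_translate[of "fst v" "snd v" t]
    by (auto simp: nonzero_gauss_rows_def row_mmul_def row2_def mat_upper_def add.commute mult.commute)
next
  case L
  have "h (\<i> * x) (\<i> * y) = h x y" if "gauss_int x" "gauss_int y" for x y
    using h_scale[of "\<i>" x y] that by simp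
  then show ?case
    using L h_L by (auto simp: nonzero_gauss_rows_def row_mmul_def row2_def matL_def mult.commute)
next
  case S
  then show ?case
    using h_S h_1_0 by (auto simp: nonzero_gauss_rows_def row_mmul_def row2_def matS_def)
next
  case (mneg g)
  then show ?case
    by (simp add: row_mmul_mneg row2_mneg slash_mneg case_prod_beta)
next
  case (mmul g g')
  have "row_mmul v g \<in> nonzero_gauss_rows"
    using row_mmul_in_nonzero_gauss_rows[OF mmul.prems mmul.hyps(1)] .
  then have "case_prod h (row_mmul v (mmul g g')) = sl (case_prod h (row_mmul v g)) g' + case_prod h (row2 g')"
    unfolding row_mmul_mmul by (rule mmul.hyps(4))
  also have "case_prod h (row_mmul v g) = sl (case_prod h v) g + case_prod h (row2 g)"
    by (rule mmul.hyps(3)[OF mmul.prems])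
  also have "sl (sl (case_prod h v) g + case_prod h (row2 g)) g' + case_prod h (row2 g')
      = sl (case_prod h v) (mmul g g') + (sl (case_prod h (row2 g)) g' + case_prod h (row2 g'))"
    by (simp only: slash_add slash_mmul add.assoc)
  also have "sl (case_prod h (row2 g)) g' + case_prod h (row2 g') = case_prod h (row2 (mmul g g'))"
    unfolding row2_mmul by (rule mmul.hyps(4)[OF row2_in_nonzero_gauss_rows[OF mmul.hyps(1)], symmetric])
  finally show ?case .
qed

definition cocycle_of :: "cmat set \<Rightarrow> vpoly" where
  "cocycle_of X = (if X \<in> PSL2ZI then case_prod h (row2 (SOME g. g \<in> X)) else 0)"

lemma cocycle_of_proj:
  assumes "g \<in> SL2ZI"
  shows "cocycle_of (proj g) = case_prod h (row2 g)"
proof -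
  have "(SOME x. x \<in> proj g) \<in> proj g" by (rule someI[of _ g]) (simp add: proj_def)
  then show ?thesis
    using proj_in_PSL2ZI[OF assms] by (auto simp: cocycle_of_def proj_def row2_mneg case_prod_beta)
qed

lemma cocycle_of_S: "cocycle_of (proj matS) = P"
  using cocycle_of_proj[OF SL2ZI_generators(1)] by (simp add: row2_def matS_def h_1_0)

lemma cocycle_of_in_Cp: "cocycle_of \<in> Cp k"
  unfolding Cp_def
proof (intro CollectI conjI ballI allI impI)
  fix X
  assume "X \<notin> PSL2ZI"
  then show "cocycle_of X = (\<lambda>_ _. 0)" by (simp add: cocycle_of_def zero_fun_def)
next
  fix X
  assume "X \<in> PSL2ZI"
  then show "cocycle_of X \<in> Vkk k" by (simp add: cocycle_of_def h_in_Vkk case_prod_beta)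
next
  fix X Y
  assume "X \<in> PSL2ZI" "Y \<in> PSL2ZI"
  then obtain g g' where g: "g \<in> SL2ZI" "X = proj g" and g': "g' \<in> SL2ZI" "Y = proj g'"
    by (meson PSL2ZI_cases)
  then show "cocycle_of (pmul X Y) = (\<lambda>m n. pslash k (cocycle_of X) Y m n + cocycle_of Y m n)"
    using h_cocycle[OF g'(1) row2_in_nonzero_gauss_rows[OF g(1)]]
    by (simp add: pmul_proj cocycle_of_proj SL2ZI_mmul row2_mmul pslash_proj plus_fun_def)
qed (simp_all add: cocycle_of_proj row2_def mat_defs SL2ZI_iff zero_fun_def)

end

lemma Wkk_has_Cp_preimage:
  assumes "P \<in> Wkk k"
  shows "\<exists>f\<in>Cp k. f (proj matS) = P"
proof -
  interpret Wkk_element k P by unfold_locales (rule assms)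
  show ?thesis using cocycle_of_in_Cp cocycle_of_S by blast
qed

lemma Cp_add:
  assumes "f \<in> Cp k" "g \<in> Cp k"
  shows "(\<lambda>X m n. f X m n + g X m n) \<in> Cp k"
proof -
  have "pslash k (\<lambda>m n. v m n + w m n) Y = (\<lambda>m n. pslash k v Y m n + pslash k w Y m n)" for v w Y
    using slash_add[of k v w] by (simp add: pslash_def plus_fun_def)
  with assms show ?thesis
    unfolding Cp_def by (auto simp: Vkk_def fun_eq_iff)
qed

lemma Cp_scale:
  assumes "f \<in> Cp k"
  shows "(\<lambda>X m n. c * f X m n) \<in> Cp k"
proof -
  have "pslash k (\<lambda>m n. c * v m n) Y = (\<lambda>m n. c * pslash k v Y m n)" for v Y
    by (simp add: pslash_def slash_scale)
  with assms show ?thesis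
    unfolding Cp_def by (auto simp: Vkk_def fun_eq_iff algebra_simps)
qed

theorem proposition5p1:
  fixes k :: nat
  assumes "k \<ge> 1" and "odd k"
  shows "(\<forall>f\<in>Cp k. \<forall>g\<in>Cp k. (\<lambda>X m n. f X m n + g X m n) \<in> Cp k)
       \<and> (\<forall>f\<in>Cp k. \<forall>c::complex. (\<lambda>X m n. c * f X m n) \<in> Cp k)
       \<and> bij_betw (\<lambda>f. f (proj matS)) (Cp k) (Wkk k)"
proof (intro conjI ballI allI)
  show "bij_betw (\<lambda>f. f (proj matS)) (Cp k) (Wkk k)"
  proof (rule bij_betw_imageI)
    show "inj_on (\<lambda>f. f (proj matS)) (Cp k)"
      by (rule inj_onI) (rule Cp_eqI)
    show "(\<lambda>f. f (proj matS)) ` Cp k = Wkk k"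
      using Cp_S_in_Wkk Wkk_has_Cp_preimage by blast
  qed
qed (simp_all add: Cp_add Cp_scale)

end
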